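(* Let $n\geq 1$. No automorphism of a thick building of type $\mathsf{A}_n\times\mathsf{A}_n$ that interchanges the two components and acts as an involution on the type set is domestic.
   Context: A building of type $\mathsf{A}_n\times\mathsf{A}_n$ is a product of two buildings of type $\mathsf{A}_n$; its type set is the disjoint union of the two type sets, and an automorphism is a simplicial automorphism, inducing a permutation of the type set. Chambers are opposite if they are at maximal gallery distance; an automorphism is domestic if it maps no chamber to an opposite chamber. *)

theory Defs
  imports "HOL-Combinatorics.Permutations"
begin

text \<open>The Coxeter system of type A_n: W = Sym({0..n}) (permutations of {..n}),
  product = composition, generators s_i = transposition (i, i+1) for i < n,
  length = number of inversions, longest element w0 = (k \<mapsto> n - k).\<close>

definition sgen :: "nat \<Rightarrow> nat \<Rightarrow> nat" where
  "sgen i = (\<lambda>k. if k = i then Suc i else if k = Suc i then i else k)"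

definition inv_count :: "nat \<Rightarrow> (nat \<Rightarrow> nat) \<Rightarrow> nat" where
  "inv_count n p = card {(i, j). i < j \<and> j \<le> n \<and> p j < p i}"

definition w0 :: "nat \<Rightarrow> nat \<Rightarrow> nat" where
  "w0 n = (\<lambda>k. if k \<le> n then n - k else k)"

text \<open>Building of type A_n as a W-metric building (Abramenko--Brown, Def. 5.1):
  chamber set C, Weyl distance \<delta>.\<close>

definition building_An :: "nat \<Rightarrow> 'c set \<Rightarrow> ('c \<Rightarrow> 'c \<Rightarrow> nat \<Rightarrow> nat) \<Rightarrow> bool" where
  "building_An n C \<delta> \<longleftrightarrow>
     C \<noteq> {} \<and>
     (\<forall>x\<in>C. \<forall>y\<in>C. \<delta> x y permutes {..n}) \<and>
     (\<forall>x\<in>C. \<forall>y\<in>C. \<delta> x y = id \<longleftrightarrow> x = y) \<and>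
     (\<forall>x\<in>C. \<forall>y\<in>C. \<forall>z\<in>C. \<forall>i<n. \<delta> z x = sgen i \<longrightarrow>
        ((\<delta> z y = sgen i \<circ> \<delta> x y \<or> \<delta> z y = \<delta> x y) \<and>
         (inv_count n (sgen i \<circ> \<delta> x y) = Suc (inv_count n (\<delta> x y))
            \<longrightarrow> \<delta> z y = sgen i \<circ> \<delta> x y))) \<and>
     (\<forall>x\<in>C. \<forall>y\<in>C. \<forall>i<n. \<exists>z\<in>C. \<delta> z x = sgen i \<and> \<delta> z y = sgen i \<circ> \<delta> x y)"

text \<open>Thick: every panel contains at least three chambers.\<close>
definition thick_An :: "nat \<Rightarrow> 'c set \<Rightarrow> ('c \<Rightarrow> 'c \<Rightarrow> nat \<Rightarrow> nat) \<Rightarrow> bool" where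
  "thick_An n C \<delta> \<longleftrightarrow>
     (\<forall>x\<in>C. \<forall>i<n. \<exists>y\<in>C. \<exists>z\<in>C. y \<noteq> z \<and> \<delta> x y = sgen i \<and> \<delta> x z = sgen i)"

definition prod_types :: "nat \<Rightarrow> (nat + nat) set" where
  "prod_types n = Inl ` {..<n} \<union> Inr ` {..<n}"

fun prod_adj :: "('a \<Rightarrow> 'a \<Rightarrow> nat \<Rightarrow> nat) \<Rightarrow> ('b \<Rightarrow> 'b \<Rightarrow> nat \<Rightarrow> nat) \<Rightarrow> nat + nat
                  \<Rightarrow> 'a \<times> 'b \<Rightarrow> 'a \<times> 'b \<Rightarrow> bool" where
  "prod_adj \<delta>1 \<delta>2 (Inl i) x y \<longleftrightarrow> \<delta>1 (fst x) (fst y) \<in> {id, sgen i} \<and> snd x = snd y"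
| "prod_adj \<delta>1 \<delta>2 (Inr i) x y \<longleftrightarrow> \<delta>2 (snd x) (snd y) \<in> {id, sgen i} \<and> fst x = fst y"

definition prod_opp :: "nat \<Rightarrow> ('a \<Rightarrow> 'a \<Rightarrow> nat \<Rightarrow> nat) \<Rightarrow> ('b \<Rightarrow> 'b \<Rightarrow> nat \<Rightarrow> nat)
                  \<Rightarrow> 'a \<times> 'b \<Rightarrow> 'a \<times> 'b \<Rightarrow> bool" where
  "prod_opp n \<delta>1 \<delta>2 x y \<longleftrightarrow> \<delta>1 (fst x) (fst y) = w0 n \<and> \<delta>2 (snd x) (snd y) = w0 n"

definition prod_aut :: "nat \<Rightarrow> 'a set \<Rightarrow> ('a \<Rightarrow> 'a \<Rightarrow> nat \<Rightarrow> nat) \<Rightarrow> 'b set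
     \<Rightarrow> ('b \<Rightarrow> 'b \<Rightarrow> nat \<Rightarrow> nat) \<Rightarrow> ('a \<times> 'b \<Rightarrow> 'a \<times> 'b) \<Rightarrow> (nat + nat \<Rightarrow> nat + nat) \<Rightarrow> bool" where
  "prod_aut n C1 \<delta>1 C2 \<delta>2 \<phi> \<sigma> \<longleftrightarrow>
     bij_betw \<phi> (C1 \<times> C2) (C1 \<times> C2) \<and> \<sigma> permutes prod_types n \<and>
     (\<forall>x\<in>C1 \<times> C2. \<forall>y\<in>C1 \<times> C2. \<forall>t\<in>prod_types n.
        prod_adj \<delta>1 \<delta>2 t x y \<longleftrightarrow> prod_adj \<delta>1 \<delta>2 (\<sigma> t) (\<phi> x) (\<phi> y))"

definition prod_domestic :: "nat \<Rightarrow> 'a set \<Rightarrow> ('a \<Rightarrow> 'a \<Rightarrow> nat \<Rightarrow> nat) \<Rightarrow> 'b set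
     \<Rightarrow> ('b \<Rightarrow> 'b \<Rightarrow> nat \<Rightarrow> nat) \<Rightarrow> ('a \<times> 'b \<Rightarrow> 'a \<times> 'b) \<Rightarrow> bool" where
  "prod_domestic n C1 \<delta>1 C2 \<delta>2 \<phi> \<longleftrightarrow> (\<forall>x\<in>C1 \<times> C2. \<not> prod_opp n \<delta>1 \<delta>2 x (\<phi> x))"

end

theory Submission
  imports Defs
begin

text \<open>If \<open>\<sigma>\<close> interchanges the two families of types, adjacency in one factor is carried to
  adjacency in the other, so \<open>\<phi>(x\<^sub>1, x\<^sub>2) = (F x\<^sub>2, G x\<^sub>1)\<close> with \<open>G : C\<^sub>1 \<rightarrow> C\<^sub>2\<close> a bijection
  reflecting adjacency; such a map can only increase gallery distances, hence maps opposite
  chambers to opposite chambers. Fix \<open>c\<^sub>2\<close>, let \<open>G a = c\<^sub>2\<close> and \<open>y = F c\<^sub>2\<close>. In a thick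
  building any two chambers have a common opposite chamber, so some \<open>x\<close> is opposite both
  \<open>y\<close> and \<open>a\<close>; then \<open>\<phi>(x, c\<^sub>2) = (y, G x)\<close> is opposite \<open>(x, c\<^sub>2)\<close>. Only the first factor
  needs to be thick.\<close>

definition inversions :: "nat \<Rightarrow> (nat \<Rightarrow> nat) \<Rightarrow> (nat \<times> nat) set" where
  "inversions n p = {(i, j). i < j \<and> j \<le> n \<and> p j < p i}"

definition ordered_pairs :: "nat \<Rightarrow> (nat \<times> nat) set" where
  "ordered_pairs n = {(i, j). i < j \<and> j \<le> n}"

lemma finite_ordered_pairs: "finite (ordered_pairs n)"
  by (rule finite_subset[of _ "{..n} \<times> {..n}"]) (auto simp: ordered_pairs_def)

lemma inversions_subset: "inversions n p \<subseteq> ordered_pairs n"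
  by (auto simp: inversions_def ordered_pairs_def)

lemma finite_inversions: "finite (inversions n p)"
  by (rule finite_subset[OF inversions_subset finite_ordered_pairs])

lemma inv_count_eq_card: "inv_count n p = card (inversions n p)"
  by (simp add: inv_count_def inversions_def)

lemma inv_count_le: "inv_count n p \<le> card (ordered_pairs n)"
  by (simp add: inv_count_eq_card finite_ordered_pairs inversions_subset card_mono)

lemma inv_count_id: "inv_count n id = 0"
proof -
  have "inversions n id = {}" by (auto simp: inversions_def)
  then show ?thesis by (simp add: inv_count_eq_card)
qed

lemma inv_count_w0: "inv_count n (w0 n) = card (ordered_pairs n)"
  by (simp add: inv_count_eq_card inversions_def ordered_pairs_def w0_def)
     (metis (no_types, lifting) diff_less_mono2 le_less_trans nat_less_le)

lemma sgen_comp_sgen: "sgen i \<circ> (sgen i \<circ> p) = p"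
  by (auto simp: sgen_def fun_eq_iff)

lemma sgen_ne_id: "sgen i \<noteq> id"
  by (auto simp: sgen_def fun_eq_iff intro!: exI[of _ i])

lemma sgen_less_iff:
  "u \<noteq> v \<Longrightarrow> {u, v} \<noteq> {i, Suc i} \<Longrightarrow> sgen i v < sgen i u \<longleftrightarrow> v < u"
  by (auto simp: sgen_def doubleton_eq_iff)

lemma inversions_sgen_comp_iff:
  assumes p: "p permutes {..n}"
    and ab: "{a, b} \<noteq> {inv p i, inv p (Suc i)}"
  shows "(a, b) \<in> inversions n (sgen i \<circ> p) \<longleftrightarrow> (a, b) \<in> inversions n p"
proof -
  have "{p a, p b} \<noteq> {i, Suc i}"
  proof
    assume "{p a, p b} = {i, Suc i}"
    then have "inv p ` {p a, p b} = inv p ` {i, Suc i}" by simp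
    then show False using ab permutes_inverses(2)[OF p] by simp
  qed
  moreover have "a \<noteq> b \<Longrightarrow> p a \<noteq> p b"
    using permutes_inj[OF p] by (meson injD)
  ultimately have "a \<noteq> b \<Longrightarrow> sgen i (p b) < sgen i (p a) \<longleftrightarrow> p b < p a"
    by (simp add: sgen_less_iff)
  then show ?thesis
    by (auto simp: inversions_def)
qed

text \<open>Left multiplication by \<open>s\<^sub>i\<close> toggles exactly the inversion formed by the positions of
  \<open>i\<close> and \<open>i + 1\<close>.\<close>

lemma inv_count_sgen_comp:
  assumes p: "p permutes {..n}" and i: "i < n"
  shows "inv_count n (sgen i \<circ> p) = Suc (inv_count n p) \<and> inv p i < inv p (Suc i)
       \<or> Suc (inv_count n (sgen i \<circ> p)) = inv_count n p \<and> inv p (Suc i) < inv p i"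
proof -
  define a b where "a = inv p i" and "b = inv p (Suc i)"
  have pa: "p a = i" and pb: "p b = Suc i"
    using permutes_inverses[OF p] by (auto simp: a_def b_def)
  have "a \<le> n" and "b \<le> n"
    using permutes_in_image[OF p] pa pb i by (metis atMost_iff less_imp_le_nat Suc_leI)+
  have "a \<noteq> b" using pa pb by auto
  have other: "x \<in> inversions n (sgen i \<circ> p) \<longleftrightarrow> x \<in> inversions n p"
    if "x \<noteq> (a, b)" "x \<noteq> (b, a)" for x
    using that inversions_sgen_comp_iff[OF p, of "fst x" "snd x" i]
    by (cases x) (auto simp: a_def b_def doubleton_eq_iff)
  have toggle: "inv_count n q = Suc (inv_count n r)"
    if "e \<in> inversions n q" "e \<notin> inversions n r" "e' \<notin> inversions n q \<union> inversions n r"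
      and "\<And>x. x \<noteq> e \<Longrightarrow> x \<noteq> e' \<Longrightarrow> x \<in> inversions n q \<longleftrightarrow> x \<in> inversions n r"
    for q r e e'
  proof -
    have "x \<in> inversions n q \<longleftrightarrow> x \<in> insert e (inversions n r)" for x
      using that by (cases "x = e \<or> x = e'") auto
    then have "inversions n q = insert e (inversions n r)" by blast
    then show ?thesis using that(2) by (simp add: inv_count_eq_card finite_inversions)
  qed
  show ?thesis
  proof (cases "a < b")
    case True
    then have "inv_count n (sgen i \<circ> p) = Suc (inv_count n p)"
      using pa pb \<open>b \<le> n\<close> other
      by (intro toggle[of "(a, b)" _ _ "(b, a)"]) (auto simp: inversions_def sgen_def)
    then show ?thesis using True by (simp add: a_def b_def)
  next
    case False
    then have "b < a" using \<open>a \<noteq> b\<close> by simp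
    then have "inv_count n p = Suc (inv_count n (sgen i \<circ> p))"
      using pa pb \<open>a \<le> n\<close> other
      by (intro toggle[of "(b, a)" _ _ "(a, b)"]) (auto simp: inversions_def sgen_def)
    then show ?thesis using \<open>b < a\<close> by (simp add: a_def b_def)
  qed
qed

lemma inv_count_sgen_comp_cases:
  "p permutes {..n} \<Longrightarrow> i < n \<Longrightarrow> inv_count n (sgen i \<circ> p) = Suc (inv_count n p)
     \<or> Suc (inv_count n (sgen i \<circ> p)) = inv_count n p"
  using inv_count_sgen_comp by blast

lemma permutes_strict_mono_eq_id:
  assumes g: "g permutes {..n}" and mono: "\<forall>i<n. g i < g (Suc i)" and k: "k \<le> n"
  shows "g k = k"
proof -
  have gap: "g j + d \<le> g (j + d)" if "j + d \<le> n" for j d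
    using that
  proof (induction d)
    case (Suc d)
    then have "g j + d \<le> g (j + d)" "g (j + d) < g (Suc (j + d))" using mono by auto
    then show ?case by simp
  qed simp
  have "g 0 + k \<le> g k" "g k + (n - k) \<le> g n"
    using gap[of 0 k] gap[of k "n - k"] k by simp_all
  moreover have "g n \<le> n" using permutes_in_image[OF g, of n] by simp
  ultimately show ?thesis by linarith
qed

lemma w0_permutes: "w0 n permutes {..n}"
  unfolding permutes_def w0_def
proof (intro conjI allI impI)
  show "\<exists>!x. (if x \<le> n then n - x else x) = y" for y
    by (rule ex1I[of _ "if y \<le> n then n - y else y"]) (auto split: if_splits)
qed auto

lemma permutes_strict_antimono_eq_w0:
  assumes g: "g permutes {..n}" and anti: "\<forall>i<n. g (Suc i) < g i"
  shows "g = w0 n"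
proof
  fix k
  show "g k = w0 n k"
  proof (cases "k \<le> n")
    case True
    have le: "g i \<le> n" if "i \<le> n" for i using permutes_in_image[OF g] that by simp
    have "(w0 n \<circ> g) i < (w0 n \<circ> g) (Suc i)" if "i < n" for i
    proof -
      have "g (Suc i) < g i" "g i \<le> n" "g (Suc i) \<le> n" using anti le that by auto
      then show ?thesis by (simp add: w0_def)
    qed
    then have "w0 n (g k) = k"
      using permutes_strict_mono_eq_id[OF permutes_compose[OF g w0_permutes] _ True] by auto
    then show ?thesis using le[OF True] True by (auto simp: w0_def)
  next
    case False
    then show ?thesis using permutes_not_in[OF g] by (simp add: w0_def)
  qed
qed

lemma inv_count_descent_exists:
  assumes p: "p permutes {..n}" and "p \<noteq> id"
  shows "\<exists>i<n. Suc (inv_count n (sgen i \<circ> p)) = inv_count n p"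
proof (rule ccontr)
  assume "\<not> ?thesis"
  then have "\<forall>i<n. inv p i < inv p (Suc i)" using inv_count_sgen_comp[OF p] by fastforce
  then have "inv p k = k" if "k \<le> n" for k
    using permutes_strict_mono_eq_id[OF permutes_inv[OF p]] that by blast
  then have "p = id"
    using permutes_inverses[OF p] permutes_not_in[OF p] by (metis atMost_iff eq_id_iff)
  with \<open>p \<noteq> id\<close> show False by simp
qed

lemma inv_count_ascent_exists:
  assumes p: "p permutes {..n}" and "p \<noteq> w0 n"
  shows "\<exists>i<n. inv_count n (sgen i \<circ> p) = Suc (inv_count n p)"
proof (rule ccontr)
  assume "\<not> ?thesis"
  then have "\<forall>i<n. inv p (Suc i) < inv p i" using inv_count_sgen_comp[OF p] by fastforce
  then have "inv p = w0 n" using permutes_strict_antimono_eq_w0[OF permutes_inv[OF p]] by blast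
  then have "p = inv (w0 n)" using inv_inv_eq permutes_bij[OF p] by metis
  also have "inv (w0 n) = w0 n"
    by (rule inv_unique_comp) (auto simp: w0_def fun_eq_iff)
  finally show False using \<open>p \<noteq> w0 n\<close> by simp
qed

lemma inv_count_eq_0_iff: "p permutes {..n} \<Longrightarrow> inv_count n p = 0 \<longleftrightarrow> p = id"
  using inv_count_descent_exists inv_count_id by fastforce

lemma inv_count_eq_max_iff:
  "p permutes {..n} \<Longrightarrow> inv_count n p = card (ordered_pairs n) \<longleftrightarrow> p = w0 n"
  using inv_count_ascent_exists inv_count_le inv_count_w0 by (metis Suc_n_not_le_n)

definition adjacent :: "nat \<Rightarrow> ('c \<Rightarrow> 'c \<Rightarrow> nat \<Rightarrow> nat) \<Rightarrow> 'c \<Rightarrow> 'c \<Rightarrow> bool" where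
  "adjacent n \<delta> x z \<longleftrightarrow> (\<exists>i<n. \<delta> x z = sgen i)"

inductive gallery :: "nat \<Rightarrow> 'c set \<Rightarrow> ('c \<Rightarrow> 'c \<Rightarrow> nat \<Rightarrow> nat) \<Rightarrow> 'c \<Rightarrow> 'c \<Rightarrow> nat \<Rightarrow> bool"
  for n C \<delta> where
  gallery_refl: "x \<in> C \<Longrightarrow> gallery n C \<delta> x x 0"
| gallery_Cons: "x \<in> C \<Longrightarrow> adjacent n \<delta> x z \<Longrightarrow> gallery n C \<delta> z y k \<Longrightarrow> gallery n C \<delta> x y (Suc k)"

lemma gallery_image:
  assumes "G ` C \<subseteq> C'"
    and "\<And>a b. a \<in> C \<Longrightarrow> b \<in> C \<Longrightarrow> adjacent n \<delta> a b \<Longrightarrow> adjacent n \<delta>' (G a) (G b)"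
  shows "gallery n C \<delta> x y k \<Longrightarrow> gallery n C' \<delta>' (G x) (G y) k"
proof (induction rule: gallery.induct)
  case (gallery_refl x)
  then show ?case using assms(1) by (auto intro: gallery.gallery_refl)
next
  case (gallery_Cons x z y k)
  have "z \<in> C" using gallery_Cons.hyps(3) by cases auto
  then show ?case
    using gallery_Cons assms by (blast intro: gallery.gallery_Cons)
qed

locale An_building =
  fixes n :: nat and C :: "'c set" and \<delta> :: "'c \<Rightarrow> 'c \<Rightarrow> nat \<Rightarrow> nat"
  assumes building: "building_An n C \<delta>"
begin

abbreviation len :: "(nat \<Rightarrow> nat) \<Rightarrow> nat" where
  "len \<equiv> inv_count n"

lemma nonempty: "C \<noteq> {}"
  using building by (simp add: building_An_def)

lemma weyl_permutes: "x \<in> C \<Longrightarrow> y \<in> C \<Longrightarrow> \<delta> x y permutes {..n}"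
  using building by (simp add: building_An_def)

lemma weyl_eq_id_iff: "x \<in> C \<Longrightarrow> y \<in> C \<Longrightarrow> \<delta> x y = id \<longleftrightarrow> x = y"
  using building by (simp add: building_An_def)

lemma weyl_adjacent:
  assumes "x \<in> C" "y \<in> C" "z \<in> C" "i < n" "\<delta> z x = sgen i"
  shows "\<delta> z y = sgen i \<circ> \<delta> x y \<or> \<delta> z y = \<delta> x y"
    and "len (sgen i \<circ> \<delta> x y) = Suc (len (\<delta> x y)) \<Longrightarrow> \<delta> z y = sgen i \<circ> \<delta> x y"
  using building assms unfolding building_An_def by blast+

lemma weyl_exists_adjacent:
  "x \<in> C \<Longrightarrow> y \<in> C \<Longrightarrow> i < n \<Longrightarrow> \<exists>z\<in>C. \<delta> z x = sgen i \<and> \<delta> z y = sgen i \<circ> \<delta> x y"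
  using building unfolding building_An_def by blast

lemma weyl_sgen_sym:
  assumes x: "x \<in> C" and y: "y \<in> C" and i: "i < n" and xy: "\<delta> x y = sgen i"
  shows "\<delta> y x = sgen i"
proof -
  have "x \<noteq> y" using xy weyl_eq_id_iff x sgen_ne_id by metis
  then have "\<delta> y x \<noteq> id" using weyl_eq_id_iff x y by simp
  moreover have "\<delta> x x = sgen i \<circ> \<delta> y x \<or> \<delta> x x = \<delta> y x"
    using weyl_adjacent(1)[OF y x x i xy] .
  ultimately have "sgen i \<circ> \<delta> y x = id" using weyl_eq_id_iff x by metis
  then show ?thesis by (metis comp_id sgen_comp_sgen)
qed

lemma adjacent_sym: "x \<in> C \<Longrightarrow> y \<in> C \<Longrightarrow> adjacent n \<delta> x y \<Longrightarrow> adjacent n \<delta> y x"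
  using weyl_sgen_sym by (auto simp: adjacent_def)

lemma gallery_mem: "gallery n C \<delta> x y k \<Longrightarrow> x \<in> C \<and> y \<in> C"
  by (induction rule: gallery.induct) auto

lemma len_le_gallery: "gallery n C \<delta> x y k \<Longrightarrow> len (\<delta> x y) \<le> k"
proof (induction rule: gallery.induct)
  case (gallery_refl x)
  then have "\<delta> x x = id" using weyl_eq_id_iff by simp
  then show ?case by (metis inv_count_id le_refl)
next
  case (gallery_Cons x z y k)
  obtain i where i: "i < n" "\<delta> x z = sgen i" using gallery_Cons.hyps(2) by (auto simp: adjacent_def)
  have z: "z \<in> C" and y: "y \<in> C" using gallery_mem[OF gallery_Cons.hyps(3)] by auto
  have "\<delta> z x = sgen i" using weyl_sgen_sym[OF gallery_Cons.hyps(1) z i] .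
  then have "\<delta> x y = sgen i \<circ> \<delta> z y \<or> \<delta> x y = \<delta> z y"
    using weyl_adjacent(1)[OF z y gallery_Cons.hyps(1) i(1)] i by simp
  then have "len (\<delta> x y) \<le> Suc (len (\<delta> z y))"
    using inv_count_sgen_comp_cases[OF weyl_permutes[OF z y] i(1)] by auto
  then show ?case using gallery_Cons.IH by simp
qed

lemma gallery_of_len: "x \<in> C \<Longrightarrow> y \<in> C \<Longrightarrow> gallery n C \<delta> x y (len (\<delta> x y))"
proof (induction "len (\<delta> x y)" arbitrary: x)
  case 0
  then show ?case using inv_count_eq_0_iff weyl_permutes weyl_eq_id_iff gallery_refl by metis
next
  case (Suc k)
  then have "\<delta> x y \<noteq> id" using inv_count_id by (metis nat.distinct(1))
  then obtain i where i: "i < n" "Suc (len (sgen i \<circ> \<delta> x y)) = len (\<delta> x y)"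
    using inv_count_descent_exists[OF weyl_permutes[OF Suc.prems]] by blast
  obtain z where z: "z \<in> C" "\<delta> z x = sgen i" "\<delta> z y = sgen i \<circ> \<delta> x y"
    using weyl_exists_adjacent[OF Suc.prems i(1)] by blast
  have adj: "adjacent n \<delta> x z"
    using weyl_sgen_sym[OF z(1) Suc.prems(1) i(1) z(2)] i(1) by (auto simp: adjacent_def)
  have "len (\<delta> z y) = k" using z(3) i(2) Suc.hyps(2) by simp
  then have "gallery n C \<delta> z y k" using Suc.hyps(1)[of z] z(1) Suc.prems(2) by simp
  then have "gallery n C \<delta> x y (Suc k)" by (rule gallery_Cons[OF Suc.prems(1) adj])
  then show ?case using Suc.hyps(2) by simp
qed

lemma gallery_rev: "gallery n C \<delta> x y k \<Longrightarrow> gallery n C \<delta> y x k"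
proof (induction rule: gallery.induct)
  case (gallery_refl x)
  then show ?case by (rule gallery.gallery_refl)
next
  case (gallery_Cons x z y k)
  have snoc: "gallery n C \<delta> a b m \<Longrightarrow> adjacent n \<delta> b c \<Longrightarrow> c \<in> C \<Longrightarrow> gallery n C \<delta> a c (Suc m)"
    for a b c m
    by (induction rule: gallery.induct) (auto intro: gallery.intros)
  have "z \<in> C" using gallery_mem[OF gallery_Cons.hyps(3)] by simp
  then show ?case using snoc[OF gallery_Cons.IH] adjacent_sym gallery_Cons.hyps by blast
qed

lemma opposite_sym:
  assumes x: "x \<in> C" and y: "y \<in> C" and "\<delta> x y = w0 n"
  shows "\<delta> y x = w0 n"
proof -
  have "len (\<delta> x y) = card (ordered_pairs n)"
    using inv_count_eq_max_iff[OF weyl_permutes[OF x y]] assms(3) by simp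
  moreover have "len (\<delta> x y) \<le> len (\<delta> y x)"
    using len_le_gallery[OF gallery_rev[OF gallery_of_len[OF y x]]] .
  ultimately have "len (\<delta> y x) = card (ordered_pairs n)"
    using inv_count_le[of n "\<delta> y x"] by simp
  then show ?thesis using inv_count_eq_max_iff[OF weyl_permutes[OF y x]] by simp
qed

text \<open>In a panel of type \<open>s\<^sub>j\<close> all chambers but one have the same Weyl distance to \<open>z\<close>;
  so of two chambers adjacent to \<open>x\<close> one is not closer to \<open>z\<close> than \<open>x\<close>.\<close>

lemma panel_not_both_closer:
  assumes x: "x \<in> C" and a: "a \<in> C" and b: "b \<in> C" and z: "z \<in> C" and j: "j < n"
    and "a \<noteq> b" and xa: "\<delta> x a = sgen j" and xb: "\<delta> x b = sgen j"
  shows "len (\<delta> x z) \<le> len (\<delta> a z) \<or> len (\<delta> x z) \<le> len (\<delta> b z)"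
proof -
  define u where "u = \<delta> x z"
  have ax: "\<delta> a x = sgen j" and bx: "\<delta> b x = sgen j"
    using weyl_sgen_sym[OF x a j xa] weyl_sgen_sym[OF x b j xb] .
  consider "len (sgen j \<circ> u) = Suc (len u)" | "Suc (len (sgen j \<circ> u)) = len u"
    using inv_count_sgen_comp_cases[OF weyl_permutes[OF x z] j] u_def by blast
  then show ?thesis
  proof cases
    case 1
    then show ?thesis using weyl_adjacent(2)[OF x z a j ax] u_def by simp
  next
    case down: 2
    show ?thesis
    proof (rule ccontr)
      assume farther: "\<not> ?thesis"
      then have az: "\<delta> a z = sgen j \<circ> u" and bz: "\<delta> b z = sgen j \<circ> u"
        using weyl_adjacent(1)[OF x z a j ax] weyl_adjacent(1)[OF x z b j bx] u_def by auto
      have "\<delta> a b = sgen j \<circ> sgen j \<or> \<delta> a b = sgen j"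
        using weyl_adjacent(1)[OF x b a j ax] xb by simp
      moreover have "sgen j \<circ> sgen j = id" by (metis comp_id sgen_comp_sgen)
      moreover have "\<delta> a b \<noteq> id" using weyl_eq_id_iff[OF a b] \<open>a \<noteq> b\<close> by simp
      ultimately have "\<delta> a b = sgen j" by auto
      then have "\<delta> b a = sgen j" using weyl_sgen_sym[OF a b j] by blast
      moreover have "len (sgen j \<circ> \<delta> a z) = Suc (len (\<delta> a z))"
        using az down by (simp add: sgen_comp_sgen)
      ultimately have "\<delta> b z = u"
        using weyl_adjacent(2)[OF a z b j] az by (simp add: sgen_comp_sgen)
      then show False using farther u_def by simp
    qed
  qed
qed

lemma exists_farther_neighbour:
  assumes thick: "thick_An n C \<delta>" and x: "x \<in> C" and y: "y \<in> C" and z: "z \<in> C"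
    and "\<delta> x y \<noteq> w0 n"
  shows "\<exists>x'\<in>C. len (\<delta> x' y) = Suc (len (\<delta> x y)) \<and> len (\<delta> x z) \<le> len (\<delta> x' z)"
proof -
  obtain j where j: "j < n" "len (sgen j \<circ> \<delta> x y) = Suc (len (\<delta> x y))"
    using inv_count_ascent_exists[OF weyl_permutes[OF x y] \<open>\<delta> x y \<noteq> w0 n\<close>] by blast
  obtain a b where ab: "a \<in> C" "b \<in> C" "a \<noteq> b" "\<delta> x a = sgen j" "\<delta> x b = sgen j"
    using thick x j(1) unfolding thick_An_def by blast
  have "len (\<delta> c y) = Suc (len (\<delta> x y))" if "c \<in> C" "\<delta> x c = sgen j" for c
    using weyl_adjacent(2)[OF x y that(1) j(1) weyl_sgen_sym[OF x that(1) j(1) that(2)]] j(2) that by simp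
  then show ?thesis
    using panel_not_both_closer[OF x ab(1,2) z j(1) ab(3-5)] ab by blast
qed

lemma common_opposite:
  assumes thick: "thick_An n C \<delta>" and y: "y \<in> C" and z: "z \<in> C"
  shows "\<exists>x\<in>C. \<delta> x y = w0 n \<and> \<delta> x z = w0 n"
proof -
  define f where "f x = len (\<delta> x y) + len (\<delta> x z)" for x
  have "f x < Suc (2 * card (ordered_pairs n))" for x
    using inv_count_le[of n "\<delta> x y"] inv_count_le[of n "\<delta> x z"] by (simp add: f_def)
  then obtain x where x: "x \<in> C" and max: "\<And>x'. x' \<in> C \<Longrightarrow> f x' \<le> f x"
    using ex_has_greatest_nat[of "\<lambda>x. x \<in> C" y f, OF y] by blast
  have "\<delta> x y = w0 n" "\<delta> x z = w0 n"
    using exists_farther_neighbour[OF thick x y z] exists_farther_neighbour[OF thick x z y] max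
    by (fastforce simp: f_def)+
  with x show ?thesis by blast
qed

end

text \<open>A bijection that reflects adjacency can only increase gallery distances, because its
  inverse maps galleries to galleries.\<close>

lemma opposite_image_of_adjacent_reflecting:
  assumes B1: "An_building n C1 \<delta>1" and B2: "An_building n C2 \<delta>2"
    and G: "bij_betw G C1 C2"
    and reflect: "\<And>a b. a \<in> C1 \<Longrightarrow> b \<in> C1 \<Longrightarrow> adjacent n \<delta>2 (G a) (G b) \<Longrightarrow> adjacent n \<delta>1 a b"
    and a: "a \<in> C1" and b: "b \<in> C1" and opp: "\<delta>1 a b = w0 n"
  shows "\<delta>2 (G a) (G b) = w0 n"
proof -
  define H where "H = inv_into C1 G"
  have inj: "inj_on G C1" and img: "G ` C1 = C2" using G by (auto simp: bij_betw_def)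
  have H: "H ` C2 \<subseteq> C1" using img by (auto simp: H_def inv_into_into)
  have HG: "H (G c) = c" if "c \<in> C1" for c using inv_into_f_f[OF inj that] by (simp add: H_def)
  have GH: "G (H p) = p" if "p \<in> C2" for p using f_inv_into_f[of p G C1] that img by (simp add: H_def)
  have Ga: "G a \<in> C2" and Gb: "G b \<in> C2" using img a b by auto
  have H_adjacent: "adjacent n \<delta>1 (H p) (H q)" if "p \<in> C2" "q \<in> C2" "adjacent n \<delta>2 p q" for p q
    using reflect[of "H p" "H q"] H that GH by auto
  have "gallery n C1 \<delta>1 (H (G a)) (H (G b)) (inv_count n (\<delta>2 (G a) (G b)))"
    by (rule gallery_image[OF H H_adjacent An_building.gallery_of_len[OF B2 Ga Gb]])
  then have "inv_count n (\<delta>1 a b) \<le> inv_count n (\<delta>2 (G a) (G b))"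
    using An_building.len_le_gallery[OF B1] HG[OF a] HG[OF b] by simp
  moreover have "inv_count n (\<delta>1 a b) = card (ordered_pairs n)"
    using inv_count_eq_max_iff[OF An_building.weyl_permutes[OF B1 a b]] opp by simp
  ultimately have "inv_count n (\<delta>2 (G a) (G b)) = card (ordered_pairs n)"
    using inv_count_le[of n "\<delta>2 (G a) (G b)"] by simp
  then show ?thesis using inv_count_eq_max_iff[OF An_building.weyl_permutes[OF B2 Ga Gb]] by simp
qed

locale swapping_automorphism =
  B1: An_building n C1 \<delta>1 + B2: An_building n C2 \<delta>2
  for n :: nat and C1 :: "'a set" and \<delta>1 and C2 :: "'b set" and \<delta>2 +
  fixes \<phi> :: "'a \<times> 'b \<Rightarrow> 'a \<times> 'b" and \<sigma> :: "nat + nat \<Rightarrow> nat + nat"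
  assumes aut: "prod_aut n C1 \<delta>1 C2 \<delta>2 \<phi> \<sigma>"
    and swaps: "\<sigma> ` Inl ` {..<n} = Inr ` {..<n}"
    and involutive: "\<forall>t\<in>prod_types n. \<sigma> (\<sigma> t) = t"
begin

lemma phi_bij: "bij_betw \<phi> (C1 \<times> C2) (C1 \<times> C2)"
  using aut by (simp add: prod_aut_def)

lemma phi_mem: "a \<in> C1 \<Longrightarrow> b \<in> C2 \<Longrightarrow> fst (\<phi> (a, b)) \<in> C1 \<and> snd (\<phi> (a, b)) \<in> C2"
  using bij_betwE[OF phi_bij] by (metis mem_Sigma_iff prod.collapse)

lemma prod_adj_phi_iff:
  "x \<in> C1 \<times> C2 \<Longrightarrow> y \<in> C1 \<times> C2 \<Longrightarrow> t \<in> prod_types n \<Longrightarrow>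
     prod_adj \<delta>1 \<delta>2 (\<sigma> t) (\<phi> x) (\<phi> y) \<longleftrightarrow> prod_adj \<delta>1 \<delta>2 t x y"
  using aut unfolding prod_aut_def by blast

lemma sigma_Inl:
  assumes "i < n"
  shows "\<exists>j<n. \<sigma> (Inl i) = Inr j"
proof -
  have "\<sigma> (Inl i) \<in> \<sigma> ` Inl ` {..<n}" using assms by simp
  then show ?thesis unfolding swaps by auto
qed

lemma sigma_Inr:
  assumes "j < n"
  shows "\<exists>i<n. \<sigma> (Inl i) = Inr j \<and> \<sigma> (Inr j) = Inl i"
proof -
  have "Inr j \<in> \<sigma> ` Inl ` {..<n}" unfolding swaps using assms by simp
  then obtain i where i: "i < n" "\<sigma> (Inl i) = Inr j" by auto
  have "\<sigma> (\<sigma> (Inl i)) = Inl i" using involutive i(1) unfolding prod_types_def by blast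
  then show ?thesis using i by auto
qed

lemma fst_phi_adjacent:
  assumes "x \<in> C1" "z \<in> C1" "adjacent n \<delta>1 x z" "c \<in> C2"
  shows "fst (\<phi> (x, c)) = fst (\<phi> (z, c))"
proof -
  obtain i where i: "i < n" "\<delta>1 x z = sgen i" using assms(3) by (auto simp: adjacent_def)
  obtain j where "\<sigma> (Inl i) = Inr j" using sigma_Inl[OF i(1)] by blast
  then show ?thesis
    using prod_adj_phi_iff[of "(x, c)" "(z, c)" "Inl i"] assms i by (simp add: prod_types_def)
qed

lemma snd_phi_adjacent:
  assumes "x \<in> C2" "z \<in> C2" "adjacent n \<delta>2 x z" "c \<in> C1"
  shows "snd (\<phi> (c, x)) = snd (\<phi> (c, z))"
proof -
  obtain j where j: "j < n" "\<delta>2 x z = sgen j" using assms(3) by (auto simp: adjacent_def)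
  obtain i where "\<sigma> (Inr j) = Inl i" using sigma_Inr[OF j(1)] by blast
  then show ?thesis
    using prod_adj_phi_iff[of "(c, x)" "(c, z)" "Inr j"] assms j by (simp add: prod_types_def)
qed

lemma fst_phi_indep:
  assumes "a \<in> C1" "b \<in> C1" "c \<in> C2"
  shows "fst (\<phi> (a, c)) = fst (\<phi> (b, c))"
  using B1.gallery_of_len[OF assms(1,2)]
proof (induction rule: gallery.induct)
  case (gallery_Cons x z y k)
  have "z \<in> C1" using B1.gallery_mem[OF gallery_Cons.hyps(3)] by simp
  then show ?case
    using fst_phi_adjacent[OF gallery_Cons.hyps(1) _ gallery_Cons.hyps(2) assms(3)] gallery_Cons.IH
    by simp
qed simp

lemma snd_phi_indep:
  assumes "a \<in> C2" "b \<in> C2" "c \<in> C1"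
  shows "snd (\<phi> (c, a)) = snd (\<phi> (c, b))"
  using B2.gallery_of_len[OF assms(1,2)]
proof (induction rule: gallery.induct)
  case (gallery_Cons x z y k)
  have "z \<in> C2" using B2.gallery_mem[OF gallery_Cons.hyps(3)] by simp
  then show ?case
    using snd_phi_adjacent[OF gallery_Cons.hyps(1) _ gallery_Cons.hyps(2) assms(3)] gallery_Cons.IH
    by simp
qed simp

lemma bij_betw_snd_phi:
  assumes c: "c \<in> C2"
  shows "bij_betw (\<lambda>x. snd (\<phi> (x, c))) C1 C2"
proof (rule bij_betw_imageI)
  have inj: "inj_on \<phi> (C1 \<times> C2)" and img: "\<phi> ` (C1 \<times> C2) = C1 \<times> C2"
    using phi_bij by (auto simp: bij_betw_def)
  show "inj_on (\<lambda>x. snd (\<phi> (x, c))) C1"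
  proof (rule inj_onI)
    fix a b assume ab: "a \<in> C1" "b \<in> C1" "snd (\<phi> (a, c)) = snd (\<phi> (b, c))"
    then have "\<phi> (a, c) = \<phi> (b, c)" using fst_phi_indep[OF ab(1,2) c] by (simp add: prod_eq_iff)
    then show "a = b" using inj ab(1,2) c by (auto dest: inj_onD)
  qed
  show "(\<lambda>x. snd (\<phi> (x, c))) ` C1 = C2"
  proof
    show "(\<lambda>x. snd (\<phi> (x, c))) ` C1 \<subseteq> C2" using phi_mem c by auto
    show "C2 \<subseteq> (\<lambda>x. snd (\<phi> (x, c))) ` C1"
    proof
      fix p assume p: "p \<in> C2"
      obtain c1 where "c1 \<in> C1" using B1.nonempty by blast
      then have "(c1, p) \<in> \<phi> ` (C1 \<times> C2)" using img p by simp
      then obtain a b where ab: "a \<in> C1" "b \<in> C2" "\<phi> (a, b) = (c1, p)" by auto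
      then have "snd (\<phi> (a, c)) = p" using snd_phi_indep[OF c ab(2) ab(1)] by simp
      then show "p \<in> (\<lambda>x. snd (\<phi> (x, c))) ` C1" using ab(1) by force
    qed
  qed
qed

lemma adjacent_of_adjacent_snd_phi:
  assumes c: "c \<in> C2" and a: "a \<in> C1" and b: "b \<in> C1"
    and adj: "adjacent n \<delta>2 (snd (\<phi> (a, c))) (snd (\<phi> (b, c)))"
  shows "adjacent n \<delta>1 a b"
proof -
  obtain j where j: "j < n" "\<delta>2 (snd (\<phi> (a, c))) (snd (\<phi> (b, c))) = sgen j"
    using adj by (auto simp: adjacent_def)
  obtain i where i: "i < n" "\<sigma> (Inl i) = Inr j" using sigma_Inr[OF j(1)] by blast
  have mem: "(a, c) \<in> C1 \<times> C2" "(b, c) \<in> C1 \<times> C2" "Inl i \<in> prod_types n"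
    using a b c i(1) by (auto simp: prod_types_def)
  have "prod_adj \<delta>1 \<delta>2 (\<sigma> (Inl i)) (\<phi> (a, c)) (\<phi> (b, c))"
    using i j fst_phi_indep[OF a b c] by simp
  then have "prod_adj \<delta>1 \<delta>2 (Inl i) (a, c) (b, c)" using prod_adj_phi_iff[OF mem] by blast
  then have "\<delta>1 a b \<in> {id, sgen i}" by simp
  moreover have "snd (\<phi> (a, c)) \<in> C2" using phi_mem a c by simp
  then have "a \<noteq> b" using j(2) by (metis B2.weyl_eq_id_iff sgen_ne_id)
  ultimately show ?thesis using B1.weyl_eq_id_iff a b i(1) by (auto simp: adjacent_def)
qed

end

theorem lemma3p7:
  fixes n :: nat and C1 :: "'a set" and C2 :: "'b set"
    and \<delta>1 :: "'a \<Rightarrow> 'a \<Rightarrow> nat \<Rightarrow> nat" and \<delta>2 :: "'b \<Rightarrow> 'b \<Rightarrow> nat \<Rightarrow> nat"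
    and \<phi> :: "'a \<times> 'b \<Rightarrow> 'a \<times> 'b" and \<sigma> :: "nat + nat \<Rightarrow> nat + nat"
  assumes "n \<ge> 1"
    and "building_An n C1 \<delta>1" and "thick_An n C1 \<delta>1"
    and "building_An n C2 \<delta>2" and "thick_An n C2 \<delta>2"
    and "prod_aut n C1 \<delta>1 C2 \<delta>2 \<phi> \<sigma>"
    and "\<sigma> ` (Inl ` {..<n}) = Inr ` {..<n}"
    and "\<forall>t\<in>prod_types n. \<sigma> (\<sigma> t) = t"
  shows "\<not> prod_domestic n C1 \<delta>1 C2 \<delta>2 \<phi>"
proof -
  interpret swapping_automorphism n C1 \<delta>1 C2 \<delta>2 \<phi> \<sigma>
    using assms by (simp add: swapping_automorphism_def An_building_def
        swapping_automorphism_axioms_def)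
  obtain c where c: "c \<in> C2" using B2.nonempty by blast
  define G where "G = (\<lambda>x. snd (\<phi> (x, c)))"
  have G: "bij_betw G C1 C2" using bij_betw_snd_phi[OF c] by (simp add: G_def)
  then obtain a where a: "a \<in> C1" "G a = c" using c by (auto simp: bij_betw_def)
  define y where "y = fst (\<phi> (a, c))"
  have "y \<in> C1" using phi_mem a c by (simp add: y_def)
  then obtain x where x: "x \<in> C1" "\<delta>1 x y = w0 n" "\<delta>1 x a = w0 n"
    using B1.common_opposite[OF assms(3) _ a(1)] by blast
  have "\<delta>2 (G a) (G x) = w0 n"
    using opposite_image_of_adjacent_reflecting[OF B1.An_building_axioms B2.An_building_axioms G]
      adjacent_of_adjacent_snd_phi[OF c] B1.opposite_sym[OF x(1) a(1) x(3)] a(1) x(1)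
    unfolding G_def by blast
  moreover have "\<phi> (x, c) = (y, G x)"
    using fst_phi_indep[OF x(1) a(1) c] by (simp add: y_def G_def prod_eq_iff)
  ultimately have "prod_opp n \<delta>1 \<delta>2 (x, c) (\<phi> (x, c))"
    using x(2) a(2) by (simp add: prod_opp_def)
  then show ?thesis using x(1) c by (auto simp: prod_domestic_def)
qed

end
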